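(* Let $\Gamma$ be a Deza graph with parameters $(n,k,k-1,a)$, $k>1$, $\beta=1$, and let $\Gamma''$ be the graph defined below. Then $\Gamma''$ is a Deza graph with parameters $(\frac{n}{2},\frac{k-1}{2},\frac{a}{2},\frac{a-2}{2})$. More precisely, for two distinct vertices $\{x,x_b\}$ and $\{y,y_b\}$ of $\Gamma''$, call the pair special if $x$ and $y$ are $NA$-vertices, $\{x',x_b'\}\ne\{y,y_b\}$, and there are exactly $8$ edges of $\Gamma$ between $\{x,x',x_b,x_b'\}$ and $\{y,y',y_b,y_b'\}$. If the two vertices are adjacent in $\Gamma''$, they have $\frac{a}{2}$ common neighbours in $\Gamma''$ if the pair is special and $\frac{a-2}{2}$ otherwise; if they are non-adjacent, they have $\frac{a-2}{2}$ common neighbours if the pair is special and $\frac{a}{2}$ otherwise.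
   Context: A Deza graph with parameters $(n,k,b,a)$, $a\le b$, is a $k$-regular graph on $n$ vertices in which any two distinct vertices have $a$ or $b$ common neighbours; $\beta$ is the number of vertices $u\ne v$ with exactly $b$ common neighbours with a given vertex $v$. Since $\beta=1$, for each vertex $x$ let $x_b$ denote the unique vertex having $b=k-1$ common neighbours with $x$. A vertex $x$ is an $A$-vertex if $x$ is adjacent to $x_b$, and an $NA$-vertex otherwise. For an $NA$-vertex $x$, $x'$ denotes the unique neighbour of $x$ not adjacent to $x_b$, and $x_b'=(x')_b=(x_b)'$. Let $\Gamma'$ be obtained from $\Gamma$ by removing all edges $\{x,x_b\}$ with $x$ an $A$-vertex and all edges $\{x,x'\}$ with $x$ an $NA$-vertex. Let $\Gamma''$ be the graph whose vertices are the pairs $\{x,x_b\}$, two distinct pairs $\{x,x_b\}$ and $\{y,y_b\}$ being adjacent iff all four edges between them are present in $\Gamma'$. *)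

theory Defs
  imports Main
begin

definition simple_graph :: "'a set \<Rightarrow> ('a \<Rightarrow> 'a \<Rightarrow> bool) \<Rightarrow> bool" where
  "simple_graph V E \<longleftrightarrow> finite V \<and> (\<forall>x y. E x y \<longrightarrow> x \<in> V \<and> y \<in> V)
     \<and> (\<forall>x y. E x y \<longrightarrow> E y x) \<and> (\<forall>x. \<not> E x x)"

definition common :: "'a set \<Rightarrow> ('a \<Rightarrow> 'a \<Rightarrow> bool) \<Rightarrow> 'a \<Rightarrow> 'a \<Rightarrow> nat" where
  "common V E x y = card {z \<in> V. E x z \<and> E y z}"

definition deza_graph :: "'a set \<Rightarrow> ('a \<Rightarrow> 'a \<Rightarrow> bool) \<Rightarrow> nat \<Rightarrow> nat \<Rightarrow> nat \<Rightarrow> nat \<Rightarrow> bool" where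
  "deza_graph V E n k b a \<longleftrightarrow> simple_graph V E \<and> card V = n \<and> a \<le> b
     \<and> (\<forall>x\<in>V. card {y \<in> V. E x y} = k)
     \<and> (\<forall>x\<in>V. \<forall>y\<in>V. x \<noteq> y \<longrightarrow> common V E x y = a \<or> common V E x y = b)"

definition beta :: "'a set \<Rightarrow> ('a \<Rightarrow> 'a \<Rightarrow> bool) \<Rightarrow> nat \<Rightarrow> 'a \<Rightarrow> nat" where
  "beta V E b v = card {u \<in> V. u \<noteq> v \<and> common V E v u = b}"

definition xb :: "'a set \<Rightarrow> ('a \<Rightarrow> 'a \<Rightarrow> bool) \<Rightarrow> nat \<Rightarrow> 'a \<Rightarrow> 'a" where
  "xb V E k x = (THE u. u \<in> V \<and> u \<noteq> x \<and> common V E x u = k - 1)"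

definition A_vertex :: "'a set \<Rightarrow> ('a \<Rightarrow> 'a \<Rightarrow> bool) \<Rightarrow> nat \<Rightarrow> 'a \<Rightarrow> bool" where
  "A_vertex V E k x \<longleftrightarrow> E x (xb V E k x)"

definition NA_vertex :: "'a set \<Rightarrow> ('a \<Rightarrow> 'a \<Rightarrow> bool) \<Rightarrow> nat \<Rightarrow> 'a \<Rightarrow> bool" where
  "NA_vertex V E k x \<longleftrightarrow> \<not> E x (xb V E k x)"

text \<open>x': the unique neighbour of x not adjacent to x_b (meaningful for NA-vertices).\<close>
definition xprime :: "'a set \<Rightarrow> ('a \<Rightarrow> 'a \<Rightarrow> bool) \<Rightarrow> nat \<Rightarrow> 'a \<Rightarrow> 'a" where
  "xprime V E k x = (THE y. y \<in> V \<and> E x y \<and> \<not> E y (xb V E k x))"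

definition Eprime :: "'a set \<Rightarrow> ('a \<Rightarrow> 'a \<Rightarrow> bool) \<Rightarrow> nat \<Rightarrow> 'a \<Rightarrow> 'a \<Rightarrow> bool" where
  "Eprime V E k u v \<longleftrightarrow> E u v
     \<and> \<not> (A_vertex V E k u \<and> v = xb V E k u) \<and> \<not> (A_vertex V E k v \<and> u = xb V E k v)
     \<and> \<not> (NA_vertex V E k u \<and> v = xprime V E k u) \<and> \<not> (NA_vertex V E k v \<and> u = xprime V E k v)"

definition V2 :: "'a set \<Rightarrow> ('a \<Rightarrow> 'a \<Rightarrow> bool) \<Rightarrow> nat \<Rightarrow> 'a set set" where
  "V2 V E k = (\<lambda>x. {x, xb V E k x}) ` V"

definition E2 :: "'a set \<Rightarrow> ('a \<Rightarrow> 'a \<Rightarrow> bool) \<Rightarrow> nat \<Rightarrow> 'a set \<Rightarrow> 'a set \<Rightarrow> bool" where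
  "E2 V E k P Q \<longleftrightarrow> P \<in> V2 V E k \<and> Q \<in> V2 V E k \<and> P \<noteq> Q
     \<and> (\<forall>u\<in>P. \<forall>v\<in>Q. Eprime V E k u v)"

definition special :: "'a set \<Rightarrow> ('a \<Rightarrow> 'a \<Rightarrow> bool) \<Rightarrow> nat \<Rightarrow> 'a \<Rightarrow> 'a \<Rightarrow> bool" where
  "special V E k x y \<longleftrightarrow> NA_vertex V E k x \<and> NA_vertex V E k y
     \<and> {xprime V E k x, xprime V E k (xb V E k x)} \<noteq> {y, xb V E k y}
     \<and> card {(u, v). u \<in> {x, xprime V E k x, xb V E k x, xprime V E k (xb V E k x)}
                   \<and> v \<in> {y, xprime V E k y, xb V E k y, xprime V E k (xb V E k y)}
                   \<and> E u v} = 8"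

end

theory Submission
  imports Defs
begin

(* Counting walks of length three in two ways shows that x \<mapsto> x_b is an involutive
   automorphism of \<Gamma>. Hence every vertex x has exactly one neighbour outside N(x_b), its
   mate (x_b for an A-vertex, x' for an NA-vertex); mate is a perfect matching commuting with
   x \<mapsto> x_b, and \<Gamma>' is \<Gamma> with this matching removed. So the \<Gamma>'-neighbourhood of x is
   N(x) \<inter> N(x_b), \<Gamma>'-adjacency is constant on the pairs {x, x_b}, and degrees and common
   neighbourhoods in \<Gamma>'' are half of those in \<Gamma>'. For y outside {x, x_b} the common
   \<Gamma>'-neighbours of x and y are their a common \<Gamma>-neighbours minus mate x and mate y; a parity
   argument shows that mate x ~ y iff mate y ~ x, so \<Gamma>'' has a/2 or (a-2)/2 common neighbours,
   and the edge count in the definition of special pairs detects which case occurs. *)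

lemma card_eq_twice_card_pairs:
  assumes "\<And>z. z \<in> S \<Longrightarrow> f z \<in> S \<and> f z \<noteq> z \<and> f (f z) = z"
  shows "card S = 2 * card ((\<lambda>z. {z, f z}) ` S)"
proof -
  let ?P = "(\<lambda>z. {z, f z}) ` S"
  have f_in: "f z \<in> S" and card_pair: "card {z, f z} = 2" and f_f: "f (f z) = z" if "z \<in> S" for z
    using assms[OF that] by auto
  have "disjnt {x, f x} {y, f y}" if "x \<in> S" "y \<in> S" "{x, f x} \<noteq> {y, f y}" for x y
  proof -
    have "y \<noteq> x \<and> y \<noteq> f x \<and> f y \<noteq> x \<and> f y \<noteq> f x"
      using that f_f by (metis insert_commute)
    then show ?thesis
      by (simp add: disjnt_def)
  qed
  then have "pairwise disjnt ?P"
    by (intro pairwise_imageI) simp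
  then have "card (\<Union>?P) = (\<Sum>P\<in>?P. card P)"
    by (intro card_Union_disjoint) auto
  also have "\<dots> = (\<Sum>P\<in>?P. 2)"
    using card_pair by (intro sum.cong) auto
  also have "\<Union>?P = S"
    using f_in by blast
  finally show ?thesis by simp
qed

lemma card_pairs_Un_left:
  assumes "finite P" "finite P'" "finite Q" "P \<inter> P' = {}"
  shows "card {(u, v). u \<in> P \<union> P' \<and> v \<in> Q \<and> R u v}
    = card {(u, v). u \<in> P \<and> v \<in> Q \<and> R u v} + card {(u, v). u \<in> P' \<and> v \<in> Q \<and> R u v}"
proof -
  have "finite {(u, v). u \<in> X \<and> v \<in> Q \<and> R u v}" if "finite X" for X
    by (rule finite_subset[of _ "X \<times> Q"]) (use that assms(3) in auto)
  moreover have "{(u, v). u \<in> P \<union> P' \<and> v \<in> Q \<and> R u v}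
    = {(u, v). u \<in> P \<and> v \<in> Q \<and> R u v} \<union> {(u, v). u \<in> P' \<and> v \<in> Q \<and> R u v}"
    by auto
  ultimately show ?thesis
    using assms by (simp add: card_Un_disjoint disjoint_iff)
qed

lemma card_pairs_Un_right:
  assumes "finite P" "finite Q" "finite Q'" "Q \<inter> Q' = {}"
  shows "card {(u, v). u \<in> P \<and> v \<in> Q \<union> Q' \<and> R u v}
    = card {(u, v). u \<in> P \<and> v \<in> Q \<and> R u v} + card {(u, v). u \<in> P \<and> v \<in> Q' \<and> R u v}"
proof -
  have "finite {(u, v). u \<in> P \<and> v \<in> X \<and> R u v}" if "finite X" for X
    by (rule finite_subset[of _ "P \<times> X"]) (use that assms(1) in auto)
  moreover have "{(u, v). u \<in> P \<and> v \<in> Q \<union> Q' \<and> R u v}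
    = {(u, v). u \<in> P \<and> v \<in> Q \<and> R u v} \<union> {(u, v). u \<in> P \<and> v \<in> Q' \<and> R u v}"
    by auto
  ultimately show ?thesis
    using assms by (simp add: card_Un_disjoint disjoint_iff)
qed

lemma sum_common_nbrs_commute:
  assumes "simple_graph V E"
  shows "(\<Sum>z\<in>{z \<in> V. E x z}. common V E z y) = (\<Sum>w\<in>{w \<in> V. E y w}. common V E x w)"
proof -
  have fin: "finite V" and sym: "\<And>u v. E u v \<Longrightarrow> E v u"
    using assms by (auto simp: simple_graph_def)
  let ?W = "SIGMA z:{z \<in> V. E x z}. {w \<in> V. E z w \<and> E y w}"
  have "(\<Sum>z\<in>{z \<in> V. E x z}. common V E z y) = card ?W"
    unfolding common_def using fin by (subst card_SigmaI) auto
  also have "\<dots> = card (prod.swap ` ?W)"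
    by (simp add: card_image)
  also have "prod.swap ` ?W = (SIGMA w:{w \<in> V. E y w}. {z \<in> V. E x z \<and> E w z})"
    using sym by auto
  also have "card \<dots> = (\<Sum>w\<in>{w \<in> V. E y w}. common V E x w)"
    unfolding common_def using fin by (subst card_SigmaI) auto
  finally show ?thesis .
qed

locale deza_beta_one =
  fixes V :: "'a set" and E :: "'a \<Rightarrow> 'a \<Rightarrow> bool" and n k a :: nat
  assumes deza: "deza_graph V E n k (k - 1) a"
    and k_gt_1: "k > 1"
    and beta_one: "\<forall>v\<in>V. beta V E (k - 1) v = 1"
begin

abbreviation b :: "'a \<Rightarrow> 'a" where "b \<equiv> xb V E k"

abbreviation pair :: "'a \<Rightarrow> 'a set" where "pair x \<equiv> {x, b x}"

lemma simple: "simple_graph V E"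
  using deza by (simp add: deza_graph_def)

lemma finite_V: "finite V"
  using simple by (simp add: simple_graph_def)

lemma E_commute: "E x y \<longleftrightarrow> E y x"
  using simple unfolding simple_graph_def by blast

lemma E_irrefl: "\<not> E x x"
  using simple by (simp add: simple_graph_def)

lemma E_in_V: "E x y \<Longrightarrow> x \<in> V \<and> y \<in> V"
  using simple by (simp add: simple_graph_def)

lemma degree: "x \<in> V \<Longrightarrow> card {y \<in> V. E x y} = k"
  using deza by (simp add: deza_graph_def)

lemma common_cases:
  "x \<in> V \<Longrightarrow> y \<in> V \<Longrightarrow> x \<noteq> y \<Longrightarrow> common V E x y = a \<or> common V E x y = k - 1"
  using deza by (simp add: deza_graph_def)

lemma common_commute: "common V E x y = common V E y x"
  unfolding common_def by (simp add: conj_commute)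

lemma common_self: "x \<in> V \<Longrightarrow> common V E x x = k"
  unfolding common_def using degree by simp

lemma xb_unique:
  assumes "x \<in> V"
  shows "{u \<in> V. u \<noteq> x \<and> common V E x u = k - 1} = {b x}"
proof -
  obtain u where u: "{u \<in> V. u \<noteq> x \<and> common V E x u = k - 1} = {u}"
    using beta_one assms unfolding beta_def by (metis card_1_singletonE)
  then have "\<And>w. w \<in> V \<and> w \<noteq> x \<and> common V E x w = k - 1 \<longleftrightarrow> w = u"
    by blast
  then have "b x = u"
    unfolding xb_def by simp
  with u show ?thesis by simp
qed

lemma xb_in_V: "x \<in> V \<Longrightarrow> b x \<in> V"
  using xb_unique by blast

lemma xb_neq: "x \<in> V \<Longrightarrow> b x \<noteq> x"
  using xb_unique by blast

lemma common_xb: "x \<in> V \<Longrightarrow> common V E x (b x) = k - 1"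
  using xb_unique by blast

lemma xb_eqI: "x \<in> V \<Longrightarrow> u \<in> V \<Longrightarrow> u \<noteq> x \<Longrightarrow> common V E x u = k - 1 \<Longrightarrow> u = b x"
  using xb_unique by blast

lemma xb_xb: "x \<in> V \<Longrightarrow> b (b x) = x"
  by (metis xb_eqI xb_in_V common_xb common_commute)

lemma in_pair_commute: "x \<in> V \<Longrightarrow> y \<in> V \<Longrightarrow> y \<in> pair x \<longleftrightarrow> x \<in> pair y"
  by (metis xb_xb insert_iff singleton_iff)

lemma xb_eq_iff: "x \<in> V \<Longrightarrow> y \<in> V \<Longrightarrow> b x = y \<longleftrightarrow> x = b y"
  using xb_xb by metis

lemma pair_eq_iff:
  assumes x: "x \<in> V" and y: "y \<in> V"
  shows "pair x = pair y \<longleftrightarrow> y \<in> pair x"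
proof
  assume "y \<in> pair x"
  then consider "y = x" | "y = b x" by blast
  then show "pair x = pair y"
    using xb_xb[OF x] by cases auto
qed blast

lemma pair_disjoint:
  assumes "x \<in> V" "y \<in> V" "y \<notin> pair x"
  shows "pair x \<inter> pair y = {}"
proof -
  have "b y \<noteq> x" "b y \<noteq> b x"
    using assms xb_eq_iff[of y x] xb_eq_iff[of y "b x"] xb_xb[of x] xb_in_V[of x] by auto
  with assms show ?thesis by auto
qed

lemma common_eq_a: "x \<in> V \<Longrightarrow> y \<in> V \<Longrightarrow> y \<notin> pair x \<Longrightarrow> common V E x y = a"
  by (metis common_cases xb_eqI insertCI)

lemma a_less: "x \<in> V \<Longrightarrow> a < k - 1"
proof (rule ccontr)
  assume x: "x \<in> V" and "\<not> a < k - 1"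
  then have "a = k - 1"
    using deza by (simp add: deza_graph_def)
  then have "V - {x} = {b x}"
    using xb_unique[OF x] common_cases[OF x] by auto
  moreover have "{y \<in> V. E x y} \<subseteq> V - {x}"
    using E_irrefl by auto
  then have "card {y \<in> V. E x y} \<le> card (V - {x})"
    using finite_V by (intro card_mono) auto
  ultimately have "k \<le> 1"
    using degree[OF x] by simp
  with k_gt_1 show False by simp
qed

lemma sum_common_nbrs:
  assumes x: "x \<in> V" and y: "y \<in> V"
  shows "(\<Sum>z\<in>{z \<in> V. E x z}. common V E z y)
    = a * k + (if E x y then k - a else 0) + (if E x (b y) then k - 1 - a else 0)"
proof -
  have "common V E z y = a + (if z = y then k - a else 0) + (if z = b y then k - 1 - a else 0)"
    if "z \<in> V" for z
  proof (cases "z \<in> pair y")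
    case True
    then show ?thesis
      using common_self[OF y] common_xb[OF y] common_commute[of z y] xb_neq[OF y] a_less[OF y]
      by auto
  next
    case False
    then show ?thesis
      using common_eq_a[OF y that] common_commute[of z y] by auto
  qed
  then have "(\<Sum>z\<in>{z \<in> V. E x z}. common V E z y)
    = (\<Sum>z\<in>{z \<in> V. E x z}. a + (if z = y then k - a else 0) + (if z = b y then k - 1 - a else 0))"
    by (intro sum.cong) auto
  also have "\<dots> = a * k + (if E x y then k - a else 0) + (if E x (b y) then k - 1 - a else 0)"
    using finite_V degree[OF x] y xb_in_V[OF y] by (simp add: sum.distrib sum.delta)
  finally show ?thesis .
qed

lemma E_xb_commute:
  assumes x: "x \<in> V" and y: "y \<in> V"
  shows "E x (b y) \<longleftrightarrow> E (b x) y"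
proof -
  have "a * k + (if E x y then k - a else 0) + (if E x (b y) then k - 1 - a else 0)
      = (\<Sum>z\<in>{z \<in> V. E x z}. common V E z y)"
    using sum_common_nbrs[OF x y] by simp
  also have "\<dots> = (\<Sum>w\<in>{w \<in> V. E y w}. common V E x w)"
    using sum_common_nbrs_commute[OF simple] .
  also have "\<dots> = (\<Sum>w\<in>{w \<in> V. E y w}. common V E w x)"
    using common_commute by simp
  also have "\<dots> = a * k + (if E y x then k - a else 0) + (if E y (b x) then k - 1 - a else 0)"
    using sum_common_nbrs[OF y x] .
  finally have "(if E x (b y) then k - 1 - a else 0) = (if E y (b x) then k - 1 - a else (0::nat))"
    using E_commute[of x y] by simp
  then show ?thesis
    using a_less[OF x] E_commute by (auto split: if_splits)
qed

lemma E_xb_xb: "x \<in> V \<Longrightarrow> y \<in> V \<Longrightarrow> E (b x) (b y) \<longleftrightarrow> E x y"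
  using E_xb_commute[of x "b y"] xb_xb[of y] xb_in_V[of y] by simp

definition mate :: "'a \<Rightarrow> 'a" where
  "mate x = (if E x (b x) then b x else xprime V E k x)"

lemma nbrs_not_adj_xb:
  assumes x: "x \<in> V"
  shows "{z \<in> V. E x z \<and> \<not> E z (b x)} = {mate x}"
proof -
  let ?C = "{z \<in> V. E x z \<and> E (b x) z}"
  let ?D = "{z \<in> V. E x z \<and> \<not> E z (b x)}"
  have "{z \<in> V. E x z} = ?C \<union> ?D" "?C \<inter> ?D = {}"
    using E_commute by auto
  moreover have "card ?C = k - 1"
    using common_xb[OF x] unfolding common_def .
  ultimately have "card ?D = 1"
    using degree[OF x] finite_V k_gt_1 by (simp add: card_Un_disjoint)
  then obtain u where u: "?D = {u}"
    by (metis card_1_singletonE)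
  have "mate x = u"
  proof (cases "E x (b x)")
    case True
    then have "b x \<in> ?D"
      using xb_in_V[OF x] E_irrefl by simp
    with True u show ?thesis
      by (simp add: mate_def)
  next
    case False
    have "\<And>w. w \<in> V \<and> E x w \<and> \<not> E w (b x) \<longleftrightarrow> w = u"
      using u by blast
    with False show ?thesis
      by (simp add: mate_def xprime_def)
  qed
  with u show ?thesis by simp
qed

lemma mate_in_V: "x \<in> V \<Longrightarrow> mate x \<in> V"
  using nbrs_not_adj_xb by blast

lemma E_mate: "x \<in> V \<Longrightarrow> E x (mate x)"
  using nbrs_not_adj_xb by blast

lemma not_E_mate_xb: "x \<in> V \<Longrightarrow> \<not> E (mate x) (b x)"
  using nbrs_not_adj_xb by blast

lemma mate_neq: "x \<in> V \<Longrightarrow> mate x \<noteq> x"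
  using E_mate E_irrefl by metis

lemma E_xb_iff_neq_mate: "x \<in> V \<Longrightarrow> E x z \<and> E z (b x) \<longleftrightarrow> E x z \<and> z \<noteq> mate x"
  using nbrs_not_adj_xb E_in_V by blast

lemma mate_eqI: "x \<in> V \<Longrightarrow> E x z \<Longrightarrow> \<not> E z (b x) \<Longrightarrow> z = mate x"
  using E_xb_iff_neq_mate by blast

lemma mate_eq_xb_iff: "x \<in> V \<Longrightarrow> mate x = b x \<longleftrightarrow> E x (b x)"
  using E_mate by (metis mate_def)

lemma mate_mate:
  assumes x: "x \<in> V"
  shows "mate (mate x) = x"
proof -
  have "E (mate x) x"
    using E_mate[OF x] E_commute by blast
  moreover have "\<not> E x (b (mate x))"
    using E_xb_commute[OF x mate_in_V[OF x]] not_E_mate_xb[OF x] E_commute by blast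
  ultimately show ?thesis
    using mate_eqI[OF mate_in_V[OF x]] by metis
qed

lemma mate_xb:
  assumes x: "x \<in> V"
  shows "mate (b x) = b (mate x)"
proof -
  have "E (b x) (b (mate x))"
    using E_xb_xb[OF x mate_in_V[OF x]] E_mate[OF x] by simp
  moreover have "\<not> E (b (mate x)) (b (b x))"
    using E_xb_xb[OF mate_in_V[OF x] xb_in_V[OF x]] not_E_mate_xb[OF x] by simp
  ultimately show ?thesis
    using mate_eqI[OF xb_in_V[OF x]] by metis
qed

lemma mate_in_pair_iff:
  assumes "y \<in> V" "w \<in> V"
  shows "mate y \<in> pair w \<longleftrightarrow> y \<in> pair (mate w)"
  using assms mate_mate mate_xb mate_in_V xb_in_V by (metis insert_iff singleton_iff)

lemma A_vertex_mate: "x \<in> V \<Longrightarrow> E (mate x) (b (mate x)) \<longleftrightarrow> E x (b x)"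
  using mate_eq_xb_iff[of "mate x"] mate_eq_xb_iff[of x] mate_mate[of x] mate_in_V[of x]
    xb_eq_iff[of "mate x" x] by auto

lemma A_vertex_twins:
  assumes x: "x \<in> V" and A: "E x (b x)" and y: "y \<notin> pair x"
  shows "E x y \<longleftrightarrow> E (b x) y"
proof -
  have "mate x = b x" "mate (b x) = x"
    using A mate_eq_xb_iff[OF x] mate_xb[OF x] xb_xb[OF x] by simp_all
  then show ?thesis
    using y E_xb_iff_neq_mate[OF x, of y] E_xb_iff_neq_mate[OF xb_in_V[OF x], of y]
      xb_xb[OF x] E_commute by auto
qed

lemma Eprime_iff_mate:
  assumes u: "u \<in> V" and v: "v \<in> V"
  shows "Eprime V E k u v \<longleftrightarrow> E u v \<and> v \<noteq> mate u"
proof -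
  have "v = mate u \<longleftrightarrow> u = mate v"
    using mate_mate u v by metis
  then show ?thesis
    unfolding Eprime_def A_vertex_def NA_vertex_def mate_def by metis
qed

lemma Eprime_iff_E_both: "x \<in> V \<Longrightarrow> y \<in> V \<Longrightarrow> Eprime V E k x y \<longleftrightarrow> E x y \<and> E (b x) y"
  using Eprime_iff_mate[of x y] E_xb_iff_neq_mate[of x y] E_commute[of y "b x"] by blast

lemma Eprime_xb_left: "x \<in> V \<Longrightarrow> y \<in> V \<Longrightarrow> Eprime V E k (b x) y \<longleftrightarrow> Eprime V E k x y"
  using Eprime_iff_E_both[of x y] Eprime_iff_E_both[of "b x" y] xb_in_V[of x] xb_xb[of x] by auto

lemma Eprime_xb_right: "x \<in> V \<Longrightarrow> y \<in> V \<Longrightarrow> Eprime V E k x (b y) \<longleftrightarrow> Eprime V E k x y"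
  using Eprime_iff_E_both[of x y] Eprime_iff_E_both[of x "b y"] xb_in_V[of y]
    E_xb_commute[of x y] E_xb_xb[of x y] xb_in_V[of x] by auto

lemma Eprime_pair:
  "x \<in> V \<Longrightarrow> y \<in> V \<Longrightarrow> u \<in> pair x \<Longrightarrow> v \<in> pair y \<Longrightarrow> Eprime V E k u v \<longleftrightarrow> Eprime V E k x y"
  using Eprime_xb_left Eprime_xb_right xb_in_V by auto

lemma Eprime_commute: "Eprime V E k u v \<longleftrightarrow> Eprime V E k v u"
  unfolding Eprime_def using E_commute by blast

abbreviation nbrs' :: "'a \<Rightarrow> 'a set" where
  "nbrs' x \<equiv> {z \<in> V. Eprime V E k x z}"

lemma card_nbrs': "x \<in> V \<Longrightarrow> card (nbrs' x) = k - 1"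
proof -
  assume x: "x \<in> V"
  then have "nbrs' x = {z \<in> V. E x z \<and> E (b x) z}"
    using Eprime_iff_E_both by blast
  then show ?thesis
    using common_xb[OF x] unfolding common_def by simp
qed

lemma xb_in_nbrs': "x \<in> V \<Longrightarrow> z \<in> nbrs' x \<Longrightarrow> b z \<in> nbrs' x"
  using Eprime_xb_right xb_in_V by blast

lemma card_eq_twice_card_pair_image:
  "S \<subseteq> V \<Longrightarrow> (\<And>z. z \<in> S \<Longrightarrow> b z \<in> S) \<Longrightarrow> card S = 2 * card (pair ` S)"
  by (intro card_eq_twice_card_pairs) (use xb_neq xb_xb in blast)

lemma pair_in_V2: "x \<in> V \<Longrightarrow> pair x \<in> V2 V E k"
  unfolding V2_def by blast

lemma Collect_V2: "{P \<in> V2 V E k. Q P} = pair ` {z \<in> V. Q (pair z)}"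
  unfolding V2_def by blast

lemma E2_pair_iff:
  assumes x: "x \<in> V" and y: "y \<in> V"
  shows "E2 V E k (pair x) (pair y) \<longleftrightarrow> Eprime V E k x y"
proof
  assume xy: "Eprime V E k x y"
  then have "y \<notin> pair x"
    using Eprime_iff_E_both[OF x y] E_irrefl by auto
  then have "pair x \<noteq> pair y"
    using pair_eq_iff[OF x y] by blast
  moreover have "\<forall>u\<in>pair x. \<forall>v\<in>pair y. Eprime V E k u v"
    using Eprime_pair[OF x y] xy by blast
  ultimately show "E2 V E k (pair x) (pair y)"
    using pair_in_V2 x y unfolding E2_def by blast
qed (simp add: E2_def)

lemma twice_degree_V2_pair: "x \<in> V \<Longrightarrow> 2 * card {Q \<in> V2 V E k. E2 V E k (pair x) Q} = k - 1"
proof -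
  assume x: "x \<in> V"
  then have "{z \<in> V. E2 V E k (pair x) (pair z)} = nbrs' x"
    using E2_pair_iff by blast
  then have "{Q \<in> V2 V E k. E2 V E k (pair x) Q} = pair ` nbrs' x"
    unfolding Collect_V2 by simp
  then show ?thesis
    using card_eq_twice_card_pair_image[of "nbrs' x"] xb_in_nbrs'[OF x] card_nbrs'[OF x] by auto
qed

lemma twice_card_V2: "2 * card (V2 V E k) = n"
proof -
  have "card V = n"
    using deza by (simp add: deza_graph_def)
  then show ?thesis
    using card_eq_twice_card_pair_image[of V] xb_in_V unfolding V2_def by simp
qed

lemma twice_common_V2:
  assumes x: "x \<in> V" and y: "y \<in> V"
  shows "2 * common (V2 V E k) (E2 V E k) (pair x) (pair y) = card (nbrs' x \<inter> nbrs' y)"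
proof -
  have "{z \<in> V. E2 V E k (pair x) (pair z) \<and> E2 V E k (pair y) (pair z)} = nbrs' x \<inter> nbrs' y"
    using E2_pair_iff x y by blast
  then have "{R \<in> V2 V E k. E2 V E k (pair x) R \<and> E2 V E k (pair y) R} = pair ` (nbrs' x \<inter> nbrs' y)"
    unfolding Collect_V2 by simp
  moreover have "card (nbrs' x \<inter> nbrs' y) = 2 * card (pair ` (nbrs' x \<inter> nbrs' y))"
    using xb_in_nbrs' x y by (intro card_eq_twice_card_pair_image) auto
  ultimately show ?thesis
    unfolding common_def by simp
qed

lemma card_common_nbrs':
  assumes x: "x \<in> V" and y: "y \<in> V" and y_x: "y \<notin> pair x"
  shows "card (nbrs' x \<inter> nbrs' y) + (if E (mate x) y then 1 else 0) + (if E (mate y) x then 1 else 0) = a"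
proof -
  let ?I = "{z \<in> V. E x z \<and> E y z}"
  let ?M = "{mate x, mate y}"
  have "nbrs' x \<inter> nbrs' y = ?I - ?M"
    using Eprime_iff_mate x y by auto
  moreover have "card ?I = card (?I \<inter> ?M) + card (?I - ?M)"
    using finite_V by (intro card_Int_Diff) simp
  moreover have "card ?I = a"
    using common_eq_a[OF x y y_x] unfolding common_def .
  moreover have "?I \<inter> ?M = (if E (mate x) y then {mate x} else {}) \<union> (if E (mate y) x then {mate y} else {})"
    using E_mate mate_in_V x y E_commute by auto
  moreover have "mate x \<noteq> mate y"
    using mate_mate x y y_x by (metis insertI1)
  ultimately show ?thesis
    by (simp split: if_splits)
qed

lemma even_a_if_NA:
  assumes z: "z \<in> V" and NA: "\<not> E z (b z)"
  shows "even a"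
proof -
  have "mate z \<notin> pair z"
    using mate_neq[OF z] mate_eq_xb_iff[OF z] NA by auto
  then have "card (nbrs' z \<inter> nbrs' (mate z)) = a"
    using card_common_nbrs'[OF z mate_in_V[OF z]] mate_mate[OF z] E_irrefl by simp
  then show ?thesis
    using twice_common_V2[OF z mate_in_V[OF z]] by (metis dvd_triv_left)
qed

text \<open>For two A-vertices this is \<open>E_xb_commute\<close>; otherwise \<open>a\<close> is even, and
  \<open>card_common_nbrs'\<close> leaves no room for exactly one of the two edges.\<close>
lemma E_mate_commute:
  assumes x: "x \<in> V" and y: "y \<in> V" and y_x: "y \<notin> pair x"
  shows "E (mate x) y \<longleftrightarrow> E (mate y) x"
proof (cases "E x (b x) \<and> E y (b y)")
  case True
  then show ?thesis
    using mate_eq_xb_iff x y E_xb_commute[OF x y] E_commute by metis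
next
  case False
  then have "even a"
    using even_a_if_NA x y by blast
  moreover have "2 * common (V2 V E k) (E2 V E k) (pair x) (pair y)
      + ((if E (mate x) y then 1 else 0) + (if E (mate y) x then 1 else 0)) = a"
    using card_common_nbrs'[OF x y y_x] twice_common_V2[OF x y] by simp
  ultimately have "even ((if E (mate x) y then 1 else 0) + (if E (mate y) x then 1 else (0::nat)))"
    by (metis dvd_add_right_iff dvd_triv_left)
  then show ?thesis
    by (auto split: if_splits)
qed

lemma twice_common_V2_mate:
  assumes x: "x \<in> V" and y: "y \<in> V" and y_x: "y \<notin> pair x"
  shows "2 * common (V2 V E k) (E2 V E k) (pair x) (pair y) + (if E (mate x) y then 2 else 0) = a"
  using card_common_nbrs'[OF x y y_x] twice_common_V2[OF x y] E_mate_commute[OF x y y_x] by auto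

lemma mate_notin_pair: "x \<in> V \<Longrightarrow> \<not> E x (b x) \<Longrightarrow> mate x \<notin> pair x"
  using mate_neq mate_eq_xb_iff by blast

lemma E_pair_block:
  assumes x: "x \<in> V" and y: "y \<in> V" and y_mx: "y \<notin> pair (mate x)"
    and u: "u \<in> pair x" and v: "v \<in> pair y"
  shows "E u v \<longleftrightarrow> E x y"
proof -
  have uv: "u \<in> V" "v \<in> V"
    using u v x y xb_in_V by auto
  have "mate u \<in> pair (mate x)"
    using u mate_xb[OF x] by auto
  then have "v \<noteq> mate u"
    using v pair_disjoint[OF mate_in_V[OF x] y y_mx] by blast
  moreover have "y \<noteq> mate x"
    using y_mx by blast
  ultimately show ?thesis
    using Eprime_iff_mate[OF uv] Eprime_pair[OF x y u v] Eprime_iff_mate[OF x y] by simp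
qed

lemma card_E_pair_block:
  assumes x: "x \<in> V" and y: "y \<in> V" and "y \<notin> pair (mate x)"
  shows "card {(u, v). u \<in> pair x \<and> v \<in> pair y \<and> E u v} = (if E x y then 4 else 0)"
proof -
  have "{(u, v). u \<in> pair x \<and> v \<in> pair y \<and> E u v} = {(u, v). u \<in> pair x \<and> v \<in> pair y \<and> E x y}"
    using E_pair_block[OF assms] by blast
  then have "{(u, v). u \<in> pair x \<and> v \<in> pair y \<and> E u v} = (if E x y then pair x \<times> pair y else {})"
    by auto
  moreover have "card (pair x) = 2" "card (pair y) = 2"
    using xb_neq x y by (metis card_2_iff)+
  then have "card (pair x \<times> pair y) = 4"
    by (simp only: card_cartesian_product)
  ultimately show ?thesis by simp
qed

lemma card_E_quad_block:
  assumes x: "x \<in> V" and y: "y \<in> V" and NA_x: "\<not> E x (b x)" and NA_y: "\<not> E y (b y)"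
    and y_x: "y \<notin> pair x" and y_mx: "y \<notin> pair (mate x)"
  shows "card {(u, v). u \<in> pair x \<union> pair (mate x) \<and> v \<in> pair y \<union> pair (mate y) \<and> E u v}
    = (if E x y then 8 else 0) + (if E (mate x) y then 8 else 0)"
proof -
  let ?c = "\<lambda>p q. card {(u, v). u \<in> pair p \<and> v \<in> pair q \<and> E u v}"
  have mx: "mate x \<in> V" and my: "mate y \<in> V"
    using mate_in_V x y by auto
  have my_x: "mate y \<notin> pair x" and my_mx: "mate y \<notin> pair (mate x)"
    using mate_in_pair_iff[OF y] mate_mate[OF x] x mx y_x y_mx by auto
  have y_mmx: "y \<notin> pair (mate (mate x))" and my_mmx: "mate y \<notin> pair (mate (mate x))"
    using mate_mate[OF x] y_x my_x by auto
  have disj_x: "pair x \<inter> pair (mate x) = {}" and disj_y: "pair y \<inter> pair (mate y) = {}"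
    using pair_disjoint mate_notin_pair mate_in_V x y NA_x NA_y by auto
  have c_x_y: "?c x y = (if E x y then 4 else 0)"
    using card_E_pair_block[OF x y y_mx] .
  have c_x_my: "?c x (mate y) = (if E (mate x) y then 4 else 0)"
    using card_E_pair_block[OF x my my_mx] E_mate_commute[OF x y y_x] E_commute by simp
  have c_mx_y: "?c (mate x) y = (if E (mate x) y then 4 else 0)"
    using card_E_pair_block[OF mx y y_mmx] .
  have c_mx_my: "?c (mate x) (mate y) = (if E x y then 4 else 0)"
    using card_E_pair_block[OF mx my my_mmx] E_mate_commute[OF mx y y_mx] mate_mate[OF x]
      E_commute by simp
  have "card {(u, v). u \<in> pair x \<union> pair (mate x) \<and> v \<in> pair y \<union> pair (mate y) \<and> E u v}
      = card {(u, v). u \<in> pair x \<and> v \<in> pair y \<union> pair (mate y) \<and> E u v}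
        + card {(u, v). u \<in> pair (mate x) \<and> v \<in> pair y \<union> pair (mate y) \<and> E u v}"
    by (rule card_pairs_Un_left) (use disj_x in auto)
  also have "\<dots> = ?c x y + ?c x (mate y) + (?c (mate x) y + ?c (mate x) (mate y))"
    by (subst (1 2) card_pairs_Un_right) (use disj_y in auto)
  also have "\<dots> = (if E x y then 8 else 0) + (if E (mate x) y then 8 else 0)"
    unfolding c_x_y c_x_my c_mx_y c_mx_my by simp
  finally show ?thesis .
qed

lemma xprime_eq_mate: "\<not> E x (b x) \<Longrightarrow> xprime V E k x = mate x"
  by (simp add: mate_def)

lemma xprime_xb_eq:
  assumes x: "x \<in> V" and NA_x: "\<not> E x (b x)"
  shows "xprime V E k (b x) = b (mate x)"
proof -
  have "\<not> E (b x) (b (b x))"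
    using xb_xb[OF x] NA_x E_commute by simp
  then show ?thesis
    using xprime_eq_mate mate_xb[OF x] by simp
qed

lemma special_iff:
  assumes x: "x \<in> V" and y: "y \<in> V" and NA_x: "\<not> E x (b x)" and NA_y: "\<not> E y (b y)"
    and y_x: "y \<notin> pair x" and y_mx: "y \<notin> pair (mate x)"
  shows "special V E k x y \<longleftrightarrow> E x y \<noteq> E (mate x) y"
proof -
  have quad: "{z, xprime V E k z, b z, xprime V E k (b z)} = pair z \<union> pair (mate z)"
    if "z \<in> V" "\<not> E z (b z)" for z
    using xprime_eq_mate[OF that(2)] xprime_xb_eq[OF that] by auto
  have "{xprime V E k x, xprime V E k (b x)} = pair (mate x)"
    using xprime_eq_mate[OF NA_x] xprime_xb_eq[OF x NA_x] by simp
  also have "\<dots> \<noteq> pair y"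
    using pair_eq_iff[OF mate_in_V[OF x] y] y_mx by simp
  finally show ?thesis
    unfolding special_def NA_vertex_def quad[OF x NA_x] quad[OF y NA_y]
    using card_E_quad_block[OF assms] NA_x NA_y by auto
qed

lemma E_mate_iff_E2_neq_special:
  assumes x: "x \<in> V" and y: "y \<in> V" and y_x: "y \<notin> pair x"
  shows "E (mate x) y \<longleftrightarrow> (E2 V E k (pair x) (pair y) \<noteq> special V E k x y)"
proof -
  have E2: "E2 V E k (pair x) (pair y) \<longleftrightarrow> E x y \<and> y \<noteq> mate x"
    using E2_pair_iff[OF x y] Eprime_iff_mate[OF x y] by simp
  consider (A_x) "E x (b x)"
    | (A_y) "\<not> E x (b x)" "E y (b y)"
    | (NA_mate) "\<not> E x (b x)" "\<not> E y (b y)" "y \<in> pair (mate x)"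
    | (NA_generic) "\<not> E x (b x)" "\<not> E y (b y)" "y \<notin> pair (mate x)"
    by blast
  then show ?thesis
  proof cases
    case A_x
    then have "\<not> special V E k x y" and "mate x = b x"
      using mate_eq_xb_iff[OF x] by (simp_all add: special_def NA_vertex_def)
    then show ?thesis
      using E2 A_vertex_twins[OF x A_x y_x] y_x by auto
  next
    case A_y
    have x_y: "x \<notin> pair y"
      using in_pair_commute[OF x y] y_x by blast
    have "E (mate x) y \<longleftrightarrow> E (b y) x"
      using E_mate_commute[OF x y y_x] mate_eq_xb_iff[OF y] A_y by simp
    also have "\<dots> \<longleftrightarrow> E x y"
      using A_vertex_twins[OF y A_y(2) x_y] E_commute by blast
    finally show ?thesis
      using E2 A_y A_vertex_mate[OF x] by (auto simp: special_def NA_vertex_def)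
  next
    case NA_mate
    have "{xprime V E k x, xprime V E k (b x)} = pair y"
      using xprime_eq_mate[OF NA_mate(1)] xprime_xb_eq[OF x NA_mate(1)]
        pair_eq_iff[OF mate_in_V[OF x] y] NA_mate(3) by simp
    then have "\<not> special V E k x y"
      by (simp add: special_def)
    moreover have "\<not> E (mate x) y"
      using NA_mate A_vertex_mate[OF x] E_irrefl by auto
    moreover have "\<not> E x (b (mate x))"
      using E_xb_commute[OF x mate_in_V[OF x]] not_E_mate_xb[OF x] E_commute by blast
    ultimately show ?thesis
      using E2 NA_mate(3) by auto
  next
    case NA_generic
    then show ?thesis
      using special_iff[OF x y _ _ y_x] E2 by auto
  qed
qed

lemma common_V2_special:
  assumes x: "x \<in> V" and y: "y \<in> V" and "pair x \<noteq> pair y"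
  shows "let c = common (V2 V E k) (E2 V E k) (pair x) (pair y) in
          (E2 V E k (pair x) (pair y) \<longrightarrow>
             (special V E k x y \<longrightarrow> 2 * c = a) \<and> (\<not> special V E k x y \<longrightarrow> 2 * c + 2 = a))
        \<and> (\<not> E2 V E k (pair x) (pair y) \<longrightarrow>
             (special V E k x y \<longrightarrow> 2 * c + 2 = a) \<and> (\<not> special V E k x y \<longrightarrow> 2 * c = a))"
proof -
  have y_x: "y \<notin> pair x"
    using pair_eq_iff[OF x y] assms(3) by blast
  show ?thesis
    using twice_common_V2_mate[OF x y y_x] E_mate_iff_E2_neq_special[OF x y y_x]
    unfolding Let_def by (auto split: if_splits)
qed

lemma twice_degree_V2: "P \<in> V2 V E k \<Longrightarrow> 2 * card {Q \<in> V2 V E k. E2 V E k P Q} = k - 1"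
  using twice_degree_V2_pair unfolding V2_def by blast

lemma deza_graph_V2:
  "deza_graph (V2 V E k) (E2 V E k) (n div 2) ((k - 1) div 2) (a div 2) ((a - 2) div 2)"
proof -
  have "simple_graph (V2 V E k) (E2 V E k)"
    using finite_V Eprime_commute unfolding simple_graph_def V2_def E2_def by blast
  moreover have "common (V2 V E k) (E2 V E k) P Q \<in> {(a - 2) div 2, a div 2}"
    if P: "P \<in> V2 V E k" and Q: "Q \<in> V2 V E k" and "P \<noteq> Q" for P Q
  proof -
    obtain x y where x: "x \<in> V" "P = pair x" and y: "y \<in> V" "Q = pair y"
      using P Q unfolding V2_def by blast
    then have "y \<notin> pair x"
      using pair_eq_iff \<open>P \<noteq> Q\<close> by blast
    then show ?thesis
      using twice_common_V2_mate[OF x(1) y(1)] x y by (auto split: if_splits)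
  qed
  moreover have "card {Q \<in> V2 V E k. E2 V E k P Q} = (k - 1) div 2" if "P \<in> V2 V E k" for P
    using twice_degree_V2[OF that, symmetric] by simp
  ultimately show ?thesis
    unfolding deza_graph_def using twice_card_V2 by auto
qed

end

theorem lemma20:
  fixes V :: "'a set" and E :: "'a \<Rightarrow> 'a \<Rightarrow> bool" and n k a :: nat
  assumes "deza_graph V E n k (k - 1) a"
    and "k > 1"
    and "\<forall>v\<in>V. beta V E (k - 1) v = 1"
  shows "deza_graph (V2 V E k) (E2 V E k) (n div 2) ((k - 1) div 2) (a div 2) ((a - 2) div 2)
    \<and> 2 * card (V2 V E k) = n
    \<and> (\<forall>P\<in>V2 V E k. 2 * card {Q \<in> V2 V E k. E2 V E k P Q} = k - 1)
    \<and> (\<forall>x\<in>V. \<forall>y\<in>V. {x, xb V E k x} \<noteq> {y, xb V E k y} \<longrightarrow>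
         (let c = common (V2 V E k) (E2 V E k) {x, xb V E k x} {y, xb V E k y} in
          (E2 V E k {x, xb V E k x} {y, xb V E k y} \<longrightarrow>
             (special V E k x y \<longrightarrow> 2 * c = a) \<and> (\<not> special V E k x y \<longrightarrow> 2 * c + 2 = a))
        \<and> (\<not> E2 V E k {x, xb V E k x} {y, xb V E k y} \<longrightarrow>
             (special V E k x y \<longrightarrow> 2 * c + 2 = a) \<and> (\<not> special V E k x y \<longrightarrow> 2 * c = a))))"
proof -
  interpret deza_beta_one V E n k a
    using assms by unfold_locales
  show ?thesis
    using deza_graph_V2 twice_card_V2 twice_degree_V2 common_V2_special by blast
qed

end
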